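(* Let $h \ge 2$, $N_H \ge 1$, $f \ge 0$ and $0 \le e \le f$ be integers, and consider an IBF with $h$ hash functions and $N = h N_H$ cells storing $f$ elements, whose state matrix is an $h$-tuple $(\mathbf{F}_1, \ldots, \mathbf{F}_h) \in \mathcal{S}_{N_H,f}^h$. Then the number of $h$-tuples $(\mathbf{F}_1, \ldots, \mathbf{F}_h) \in \mathcal{S}_{N_H,f}^h$ for which the extraction process extracts at least $e$ elements is at least $$\Theta(N_H, f, h, e) = \binom{f}{e} \sum_{\mathbf{b} \in \mathcal{T}_e \,:\, \xi(\mathbf{b}) \ge e} \left( \Psi(e, \mathbf{b}) \prod_{i=1}^{h} \left[ \binom{N_H}{b_i}\, b_i!\, z(N_H - b_i, f - b_i) \right] \right).$$
   Context: For integers $n, m \ge 0$, let $\mathcal{S}_{n,m}$ denote the set of all $n \times m$ binary matrices in which every column has Hamming weight exactly one (so $|\mathcal{S}_{n,m}| = n^m$; $\mathcal{S}_{n,0}$ consists of the single empty matrix, and $\mathcal{S}_{0,m} = \emptyset$ for $m \ge 1$). A binary matrix is called a stopping matrix if none of its rows has Hamming weight exactly one. Let $z(n, m)$ denote the number of matrices in $\mathcal{S}_{n,m}$ that are stopping matrices (so $z(n,0)=1$, $z(0,m)=0$ for $m\ge1$). The state matrix of an IBF with $h$ hash functions, $N = hN_H$ cells (partitioned into $h$ sub-filters of $N_H$ cells, the $i$-th hash function mapping into the $i$-th sub-filter) and $f$ inserted elements $x_1,\dots,x_f$ is the $h$-tuple $(\mathbf{F}_1,\dots,\mathbf{F}_h)$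 with $\mathbf{F}_i \in \mathcal{S}_{N_H,f}$, where $\mathbf{F}_i$ has a $1$ in row $r$, column $j$ iff the $i$-th hash function maps $x_j$ to cell $r$ of the $i$-th sub-filter; equivalently the $hN_H \times f$ matrix obtained by stacking $\mathbf{F}_1,\dots,\mathbf{F}_h$ vertically. Extraction (peeling) process: columns are removed simultaneously from all blocks; while there is some $i \in [h]$ and some row of $\mathbf{F}_i$ whose restriction to the not-yet-removed columns has Hamming weight exactly one, remove (extract) the column containing that unique $1$; stop when no block has a row of weight one on the remaining columns. The number of extracted elements is the number of removed columns (independent of the order of removals). For $e \in \mathbb{N}$, $\mathcal{T}_e$ is the set of vectors $\mathbf{b} = (b_1, \ldots, b_h) \in \mathbb{N}^h$ with all entries in $\{0, 1, \ldots, e\}$, and $\xi(\mathbf{b}) = \sum_{i=1}^h b_i$. The function $\Psi$ is defined recursively for $e \in \mathbb{N}$, $\mathbf{b} \in \mathbb{N}^h$ by $\Psi(0, \mathbf{0}) = 1$, $\Psi(0, \mathbf{b}) = 0$ for $\mathbf{b} \ne \mathbf{0}$, and for $e \ge 1$: $\Psi(e, \mathbf{b}) = \prod_{i=1}^{h} \binom{e}{b_i} - \sum_{j=0}^{e-1} \binom{e}{j} \Psi(j, \mathbf{b})$. ($\mathbb{N}$ includes $0$.) *)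

theory Defs
  imports Main "HOL-Library.FuncSet"
begin

text \<open>A binary matrix is represented as a predicate  M r j  (row r, column j),
  required to vanish outside the index range.\<close>
type_synonym bmat = "nat \<Rightarrow> nat \<Rightarrow> bool"

definition S_set :: "nat \<Rightarrow> nat \<Rightarrow> bmat set" where
  "S_set n m = {M. (\<forall>r j. M r j \<longrightarrow> r < n \<and> j < m) \<and>
                    (\<forall>j<m. card {r. r < n \<and> M r j} = 1)}"

definition stopping :: "nat \<Rightarrow> nat \<Rightarrow> bmat \<Rightarrow> bool" where
  "stopping n m M \<longleftrightarrow> (\<forall>r<n. card {j. j < m \<and> M r j} \<noteq> 1)"

definition z :: "nat \<Rightarrow> nat \<Rightarrow> nat" where
  "z n m = card {M \<in> S_set n m. stopping n m M}"

definition states :: "nat \<Rightarrow> nat \<Rightarrow> nat \<Rightarrow> (nat \<Rightarrow> bmat) set" where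
  "states h NH f = PiE {..<h} (\<lambda>_. S_set NH f)"

definition peelable :: "nat \<Rightarrow> nat \<Rightarrow> nat \<Rightarrow> (nat \<Rightarrow> bmat) \<Rightarrow> nat set \<Rightarrow> nat \<Rightarrow> bool" where
  "peelable h NH f Fs R c \<longleftrightarrow> c < f \<and> c \<notin> R \<and>
     (\<exists>i<h. \<exists>r<NH. {j. j < f \<and> j \<notin> R \<and> Fs i r j} = {c})"

inductive peel_reach :: "nat \<Rightarrow> nat \<Rightarrow> nat \<Rightarrow> (nat \<Rightarrow> bmat) \<Rightarrow> nat set \<Rightarrow> bool"
  for h NH f Fs where
  start: "peel_reach h NH f Fs {}"
| step: "peel_reach h NH f Fs R \<Longrightarrow> peelable h NH f Fs R c \<Longrightarrow> peel_reach h NH f Fs (insert c R)"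

definition peel_final :: "nat \<Rightarrow> nat \<Rightarrow> nat \<Rightarrow> (nat \<Rightarrow> bmat) \<Rightarrow> nat set \<Rightarrow> bool" where
  "peel_final h NH f Fs R \<longleftrightarrow> peel_reach h NH f Fs R \<and>
     (\<forall>i<h. \<forall>r<NH. card {j. j < f \<and> j \<notin> R \<and> Fs i r j} \<noteq> 1)"

text \<open>The extraction process extracts at least e elements (the number extracted is
  independent of the order of removals, so we ask for a terminal run).\<close>
definition extracts_at_least :: "nat \<Rightarrow> nat \<Rightarrow> nat \<Rightarrow> (nat \<Rightarrow> bmat) \<Rightarrow> nat \<Rightarrow> bool" where
  "extracts_at_least h NH f Fs e \<longleftrightarrow> (\<exists>R. peel_final h NH f Fs R \<and> e \<le> card R)"

function Psi :: "nat \<Rightarrow> nat \<Rightarrow> (nat \<Rightarrow> nat) \<Rightarrow> int" where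
  "Psi h e b = (if e = 0 then (if (\<forall>i<h. b i = 0) then 1 else 0)
     else (\<Prod>i<h. int (e choose b i)) - (\<Sum>j<e. int (e choose j) * Psi h j b))"
  by auto
termination
  by (relation "measure (\<lambda>(h, e, b). e)") auto

definition T_set :: "nat \<Rightarrow> nat \<Rightarrow> (nat \<Rightarrow> nat) set" where
  "T_set h e = PiE {..<h} (\<lambda>_. {0..e})"

definition xi :: "nat \<Rightarrow> (nat \<Rightarrow> nat) \<Rightarrow> nat" where
  "xi h b = (\<Sum>i<h. b i)"

definition Theta :: "nat \<Rightarrow> nat \<Rightarrow> nat \<Rightarrow> nat \<Rightarrow> int" where
  "Theta NH f h e = int (f choose e) *
     (\<Sum>b \<in> {b \<in> T_set h e. xi h b \<ge> e}.
        Psi h e b * (\<Prod>i<h. int ((NH choose b i) * fact (b i) * z (NH - b i) (f - b i))))"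

end

theory Submission
  imports Defs
begin

(* Encode a matrix of S_{n,m} by the map sending each column to the row of its unique 1.
   A column that is alone in its row in some block F_i (an isolated point of the i-th map)
   is peeled in the first round, so it suffices to count the tuples with exactly e such
   columns.  Fix their set E (binom f e choices) and the sets B_i of columns isolated in
   block i: they form a cover of E with |B_i| = b_i, and covers are counted by Psi(e, b),
   whose recursion is inclusion-exclusion over the covered subset of E.  A map whose
   isolated set is exactly B_i is an injection of B_i into the rows together with a map
   without isolated points from the other columns into the unused rows, giving
   binom N_H b_i * b_i! * z(N_H - b_i, f - b_i) choices.  Theta omits only terms with
   xi(b) < e, which are nonnegative because Psi counts covers. *)

definition col_matrix :: "nat \<Rightarrow> (nat \<Rightarrow> nat) \<Rightarrow> bmat" where
  "col_matrix m g = (\<lambda>r j. j < m \<and> g j = r)"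

lemma inj_on_col_matrix: "inj_on (col_matrix m) ({..<m} \<rightarrow>\<^sub>E {..<n})"
proof (rule inj_onI, rule ext)
  fix g g' j assume g: "g \<in> {..<m} \<rightarrow>\<^sub>E {..<n}" and g': "g' \<in> {..<m} \<rightarrow>\<^sub>E {..<n}"
    and eq: "col_matrix m g = col_matrix m g'"
  show "g j = g' j"
  proof (cases "j < m")
    case True
    then show ?thesis using fun_cong[OF fun_cong[OF eq, of "g j"], of j] by (simp add: col_matrix_def)
  qed (use g g' in \<open>auto simp: PiE_def extensional_def\<close>)
qed

lemma col_matrix_image: "col_matrix m ` ({..<m} \<rightarrow>\<^sub>E {..<n}) = S_set n m"
proof
  show "col_matrix m ` ({..<m} \<rightarrow>\<^sub>E {..<n}) \<subseteq> S_set n m"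
  proof clarify
    fix g assume g: "g \<in> {..<m} \<rightarrow>\<^sub>E {..<n}"
    then have "{r. r < n \<and> col_matrix m g r j} = {g j}" if "j < m" for j
      using that by (auto simp: col_matrix_def)
    then show "col_matrix m g \<in> S_set n m" using g by (auto simp: S_set_def col_matrix_def)
  qed
next
  show "S_set n m \<subseteq> col_matrix m ` ({..<m} \<rightarrow>\<^sub>E {..<n})"
  proof
    fix M assume M: "M \<in> S_set n m"
    have "\<exists>r. {r'. r' < n \<and> M r' j} = {r}" if "j < m" for j
      using M that by (auto simp: S_set_def card_1_singleton_iff)
    then obtain g where g: "\<And>j. j < m \<Longrightarrow> {r. r < n \<and> M r j} = {g j}" by metis
    have "restrict g {..<m} \<in> {..<m} \<rightarrow>\<^sub>E {..<n}" using g by auto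
    moreover have "M = col_matrix m (restrict g {..<m})"
    proof (intro ext)
      fix r j
      have bound: "M r j \<Longrightarrow> r < n \<and> j < m" using M by (simp add: S_set_def)
      show "M r j = col_matrix m (restrict g {..<m}) r j"
      proof (cases "j < m")
        case True
        then have "M r j \<longleftrightarrow> r \<in> {r. r < n \<and> M r j}" using bound by blast
        then show ?thesis using g[OF True] True by (auto simp: col_matrix_def)
      qed (use bound in \<open>auto simp: col_matrix_def\<close>)
    qed
    ultimately show "M \<in> col_matrix m ` ({..<m} \<rightarrow>\<^sub>E {..<n})" by blast
  qed
qed

lemma finite_S_set: "finite (S_set n m)"
  unfolding col_matrix_image[symmetric] by (intro finite_imageI finite_PiE) auto

definition isolated :: "'a set \<Rightarrow> ('a \<Rightarrow> 'b) \<Rightarrow> 'a set" where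
  "isolated C g = {x \<in> C. \<forall>y \<in> C. g y = g x \<longrightarrow> y = x}"

lemma isolated_subset: "isolated C g \<subseteq> C"
  unfolding isolated_def by blast

lemma isolated_eq_empty_iff: "isolated C g = {} \<longleftrightarrow> (\<forall>x \<in> C. \<exists>y \<in> C. y \<noteq> x \<and> g y = g x)"
  unfolding isolated_def by blast

lemma stopping_col_matrix_iff:
  assumes "g \<in> {..<m} \<rightarrow>\<^sub>E {..<n}"
  shows "stopping n m (col_matrix m g) \<longleftrightarrow> isolated {..<m} g = {}"
proof -
  have row: "{j. j < m \<and> col_matrix m g r j} = {j \<in> {..<m}. g j = r}" for r
    by (auto simp: col_matrix_def)
  have weight_one: "card {j \<in> {..<m}. g j = r} = 1 \<longleftrightarrow> (\<exists>x \<in> isolated {..<m} g. g x = r)" for r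
  proof
    assume "card {j \<in> {..<m}. g j = r} = 1"
    then obtain x where "{j \<in> {..<m}. g j = r} = {x}" by (rule card_1_singletonE)
    then have "x \<in> {..<m}" "g x = r" "\<forall>y \<in> {..<m}. g y = r \<longrightarrow> y = x" by blast+
    then show "\<exists>x \<in> isolated {..<m} g. g x = r" unfolding isolated_def by blast
  next
    assume "\<exists>x \<in> isolated {..<m} g. g x = r"
    then obtain x where "x \<in> isolated {..<m} g" "g x = r" by blast
    then have "{j \<in> {..<m}. g j = r} = {x}" unfolding isolated_def by (intro set_eqI iffI) auto
    then show "card {j \<in> {..<m}. g j = r} = 1" by simp
  qed
  have "g x < n" if "x \<in> isolated {..<m} g" for x
    using that assms isolated_subset[of "{..<m}" g] by (auto simp: PiE_iff)
  then show ?thesis unfolding stopping_def row weight_one by blast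
qed

definition stopping_maps :: "'a set \<Rightarrow> 'b set \<Rightarrow> ('a \<Rightarrow> 'b) set" where
  "stopping_maps C R = {g \<in> C \<rightarrow>\<^sub>E R. isolated C g = {}}"

lemma finite_stopping_maps: "finite C \<Longrightarrow> finite R \<Longrightarrow> finite (stopping_maps C R)"
  unfolding stopping_maps_def by (simp add: finite_PiE)

lemma z_eq_card_stopping_maps: "z n m = card (stopping_maps {..<m} {..<n})"
proof -
  have "{M \<in> S_set n m. stopping n m M} = col_matrix m ` stopping_maps {..<m} {..<n}"
    unfolding stopping_maps_def col_matrix_image[symmetric]
    using stopping_col_matrix_iff by blast
  moreover have "inj_on (col_matrix m) (stopping_maps {..<m} {..<n})"
    by (rule inj_on_subset[OF inj_on_col_matrix]) (auto simp: stopping_maps_def)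
  ultimately show ?thesis by (simp add: z_def card_image)
qed

lemma card_stopping_maps_le:
  assumes \<alpha>: "bij_betw \<alpha> C' C" and \<beta>: "inj_on \<beta> R" "\<beta> ` R \<subseteq> R'"
    and fin: "finite C'" "finite R'"
  shows "card (stopping_maps C R) \<le> card (stopping_maps C' R')"
proof (rule card_inj_on_le)
  let ?\<Phi> = "\<lambda>g. restrict (\<beta> \<circ> g \<circ> \<alpha>) C'"
  show "inj_on ?\<Phi> (stopping_maps C R)"
  proof (rule inj_onI, rule ext)
    fix g1 g2 x assume g1: "g1 \<in> stopping_maps C R" and g2: "g2 \<in> stopping_maps C R"
      and eq: "?\<Phi> g1 = ?\<Phi> g2"
    show "g1 x = g2 x"
    proof (cases "x \<in> C")
      case True
      then obtain y where y: "y \<in> C'" "x = \<alpha> y" using \<alpha> by (auto simp: bij_betw_def)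
      have "\<beta> (g1 x) = \<beta> (g2 x)" using fun_cong[OF eq, of y] y by simp
      moreover have "g1 x \<in> R" "g2 x \<in> R" using g1 g2 True by (auto simp: stopping_maps_def)
      ultimately show ?thesis using \<beta>(1) by (auto simp: inj_on_def)
    qed (use g1 g2 in \<open>auto simp: stopping_maps_def PiE_def extensional_def\<close>)
  qed
  show "?\<Phi> ` stopping_maps C R \<subseteq> stopping_maps C' R'"
  proof clarify
    fix g assume g: "g \<in> stopping_maps C R"
    have "?\<Phi> g \<in> C' \<rightarrow>\<^sub>E R'"
      using g \<alpha> \<beta>(2) by (auto simp: stopping_maps_def bij_betw_def PiE_iff image_subset_iff)
    moreover have "isolated C' (?\<Phi> g) = {}" unfolding isolated_eq_empty_iff
    proof
      fix y assume y: "y \<in> C'"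
      then obtain x' where x': "x' \<in> C" "x' \<noteq> \<alpha> y" "g x' = g (\<alpha> y)"
        using g \<alpha> unfolding stopping_maps_def isolated_eq_empty_iff bij_betw_def by blast
      then obtain y' where "y' \<in> C'" "x' = \<alpha> y'" using \<alpha> by (auto simp: bij_betw_def)
      then show "\<exists>y' \<in> C'. y' \<noteq> y \<and> ?\<Phi> g y' = ?\<Phi> g y" using y x' by auto
    qed
    ultimately show "?\<Phi> g \<in> stopping_maps C' R'" by (simp add: stopping_maps_def)
  qed
  show "finite (stopping_maps C' R')" using fin by (rule finite_stopping_maps)
qed

lemma card_stopping_maps:
  assumes "finite C" "finite R"
  shows "card (stopping_maps C R) = z (card R) (card C)"
proof -
  obtain \<alpha> where \<alpha>: "bij_betw \<alpha> {..<card C} C"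
    using finite_same_card_bij[OF finite_lessThan assms(1)] by auto
  obtain \<beta> where \<beta>: "bij_betw \<beta> R {..<card R}"
    using finite_same_card_bij[OF assms(2) finite_lessThan] by auto
  have "card (stopping_maps C R) \<le> card (stopping_maps {..<card C} {..<card R})"
    using \<beta> by (intro card_stopping_maps_le[OF \<alpha>]) (auto simp: bij_betw_def)
  moreover have "card (stopping_maps {..<card C} {..<card R}) \<le> card (stopping_maps C R)"
    using bij_betw_inv_into[OF \<beta>] assms
    by (intro card_stopping_maps_le[OF bij_betw_inv_into[OF \<alpha>]]) (auto simp: bij_betw_def)
  ultimately show ?thesis by (simp add: z_eq_card_stopping_maps)
qed

lemma isolated_if_stopping_complement:
  assumes "inj_on \<phi> B" and \<psi>: "\<psi> \<in> stopping_maps (C - B) (R - \<phi> ` B)" and "B \<subseteq> C"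
  shows "isolated C (\<lambda>x. if x \<in> B then \<phi> x else \<psi> x) = B" (is "isolated C ?g = B")
proof
  show "B \<subseteq> isolated C ?g"
  proof
    fix x assume x: "x \<in> B"
    have "y = x" if y: "y \<in> C" "?g y = ?g x" for y
    proof (cases "y \<in> B")
      case True
      then show ?thesis using y x \<open>inj_on \<phi> B\<close> by (simp add: inj_on_eq_iff)
    next
      case False
      then have "\<psi> y \<notin> \<phi> ` B" using \<psi> y(1) by (auto simp: stopping_maps_def PiE_iff)
      then show ?thesis using y(2) x False by simp
    qed
    then show "x \<in> isolated C ?g" using x \<open>B \<subseteq> C\<close> unfolding isolated_def by blast
  qed
  show "isolated C ?g \<subseteq> B"
  proof
    fix x assume x: "x \<in> isolated C ?g"
    show "x \<in> B"
    proof (rule ccontr)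
      assume "x \<notin> B"
      then have "x \<in> C - B" using x unfolding isolated_def by blast
      then obtain y where "y \<in> C - B" "y \<noteq> x" "\<psi> y = \<psi> x"
        using \<psi> unfolding stopping_maps_def isolated_eq_empty_iff by blast
      then show False using x \<open>x \<notin> B\<close> unfolding isolated_def by auto
    qed
  qed
qed

lemma stopping_complement_if_isolated:
  assumes g: "g \<in> C \<rightarrow>\<^sub>E R" and "isolated C g = B"
  shows "inj_on g B" and "restrict g (C - B) \<in> stopping_maps (C - B) (R - g ` B)"
proof -
  have lone: "\<And>x y. x \<in> B \<Longrightarrow> y \<in> C \<Longrightarrow> g y = g x \<Longrightarrow> y = x"
    and not_lone: "\<And>x. x \<in> C - B \<Longrightarrow> \<exists>y \<in> C. y \<noteq> x \<and> g y = g x"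
    using assms(2) unfolding isolated_def by blast+
  show "inj_on g B" using lone assms(2) isolated_subset by (metis inj_onI subsetD)
  have "restrict g (C - B) \<in> (C - B) \<rightarrow>\<^sub>E (R - g ` B)"
    using g lone by fastforce
  moreover have "isolated (C - B) (restrict g (C - B)) = {}"
    unfolding isolated_eq_empty_iff using not_lone lone by (metis Diff_iff restrict_apply')
  ultimately show "restrict g (C - B) \<in> stopping_maps (C - B) (R - g ` B)"
    by (simp add: stopping_maps_def)
qed

lemma isolated_split_bij:
  assumes "B \<subseteq> C"
  shows "bij_betw (\<lambda>g. (restrict g B, restrict g (C - B))) {g \<in> C \<rightarrow>\<^sub>E R. isolated C g = B}
           (SIGMA \<phi>:{\<phi> \<in> B \<rightarrow>\<^sub>E R. inj_on \<phi> B}. stopping_maps (C - B) (R - \<phi> ` B))"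
    (is "bij_betw ?split ?L ?S")
proof (rule bij_betw_imageI)
  show "inj_on ?split ?L"
  proof (rule inj_onI, rule ext)
    fix g1 g2 x assume g: "g1 \<in> ?L" "g2 \<in> ?L" and eq: "?split g1 = ?split g2"
    show "g1 x = g2 x"
    proof (cases "x \<in> C")
      case True
      from eq have "restrict g1 B x = restrict g2 B x" "restrict g1 (C - B) x = restrict g2 (C - B) x"
        by simp_all
      with True show ?thesis by (cases "x \<in> B") simp_all
    next
      case False
      from g have "g1 \<in> C \<rightarrow>\<^sub>E R" "g2 \<in> C \<rightarrow>\<^sub>E R" by blast+
      with False show ?thesis using PiE_arb by metis
    qed
  qed
  show "?split ` ?L = ?S"
  proof
    show "?split ` ?L \<subseteq> ?S"
    proof (rule image_subsetI)
      fix g assume "g \<in> ?L"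
      then have g: "g \<in> C \<rightarrow>\<^sub>E R" "isolated C g = B" by blast+
      have "restrict g B ` B = g ` B" by simp
      then show "?split g \<in> ?S"
        using stopping_complement_if_isolated[OF g] g(1) assms
        by (auto simp: inj_on_def)
    qed
    show "?S \<subseteq> ?split ` ?L"
    proof clarify
      fix \<phi> \<psi> assume \<phi>: "\<phi> \<in> B \<rightarrow>\<^sub>E R" "inj_on \<phi> B"
        and \<psi>: "\<psi> \<in> stopping_maps (C - B) (R - \<phi> ` B)"
      then have \<psi>': "\<psi> \<in> (C - B) \<rightarrow>\<^sub>E (R - \<phi> ` B)" "isolated (C - B) \<psi> = {}"
        by (auto simp: stopping_maps_def)
      define g where "g x = (if x \<in> B then \<phi> x else \<psi> x)" for x
      have "g x \<in> R" if "x \<in> C" for x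
        using that \<phi>(1) \<psi>'(1) by (cases "x \<in> B") (auto simp: g_def)
      moreover have "g x = undefined" if "x \<notin> C" for x
        using that assms PiE_arb[OF \<psi>'(1)] by (auto simp: g_def)
      ultimately have "g \<in> C \<rightarrow>\<^sub>E R" unfolding PiE_iff extensional_def by blast
      moreover have "isolated C g = B"
        unfolding g_def using isolated_if_stopping_complement \<phi>(2) \<psi> assms by blast
      moreover have "restrict g B = \<phi>" "restrict g (C - B) = \<psi>"
        using PiE_arb[OF \<phi>(1)] PiE_arb[OF \<psi>'(1)] by (auto simp: g_def fun_eq_iff)
      ultimately show "(\<phi>, \<psi>) \<in> ?split ` ?L" by (auto intro: image_eqI[where x = g])
    qed
  qed
qed

lemma binomial_mult_fact: "(n choose k) * fact k = (\<Prod>i = 0..<k. n - i)"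
proof (induction k)
  case (Suc k)
  have "(n choose Suc k) * fact (Suc k) = (Suc k * (n choose Suc k)) * fact k"
    by (simp add: algebra_simps)
  also have "\<dots> = (n - k) * ((n choose k) * fact k)"
    using binomial_absorption[of k n] binomial_absorb_comp[of n k] by simp
  also have "\<dots> = (\<Prod>i = 0..<Suc k. n - i)" using Suc by (simp add: mult.commute)
  finally show ?case .
qed simp

lemma card_inj_PiE:
  assumes "finite B" "finite R"
  shows "card {\<phi> \<in> B \<rightarrow>\<^sub>E R. inj_on \<phi> B} = (card R choose card B) * fact (card B)"
  using card_inj_on_subset_funcset[OF assms order_refl]
  by (simp add: binomial_mult_fact atLeast0LessThan)

lemma card_maps_with_isolated:
  assumes fin: "finite C" "finite R" and "B \<subseteq> C"
  shows "card {g \<in> C \<rightarrow>\<^sub>E R. isolated C g = B} =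
         (card R choose card B) * fact (card B) * z (card R - card B) (card C - card B)"
proof -
  let ?I = "{\<phi> \<in> B \<rightarrow>\<^sub>E R. inj_on \<phi> B}"
  have finB: "finite B" using fin \<open>B \<subseteq> C\<close> finite_subset by blast
  have stop: "card (stopping_maps (C - B) (R - \<phi> ` B)) = z (card R - card B) (card C - card B)"
    if "\<phi> \<in> ?I" for \<phi>
  proof -
    have "card (R - \<phi> ` B) = card R - card B"
      using that fin finB by (subst card_Diff_subset) (auto simp: card_image)
    moreover have "card (C - B) = card C - card B"
      using \<open>B \<subseteq> C\<close> finB by (simp add: card_Diff_subset)
    ultimately show ?thesis using fin by (simp add: card_stopping_maps)
  qed
  have "card {g \<in> C \<rightarrow>\<^sub>E R. isolated C g = B} = card (SIGMA \<phi>:?I. stopping_maps (C - B) (R - \<phi> ` B))"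
    using bij_betw_same_card[OF isolated_split_bij[OF \<open>B \<subseteq> C\<close>]] .
  also have "\<dots> = (\<Sum>\<phi>\<in>?I. card (stopping_maps (C - B) (R - \<phi> ` B)))"
    using fin finB by (intro card_SigmaI) (auto simp: finite_PiE intro: finite_stopping_maps)
  also have "\<dots> = card ?I * z (card R - card B) (card C - card B)"
    using stop by simp
  finally show ?thesis using card_inj_PiE[OF finB fin(2)] by simp
qed

definition covers :: "nat \<Rightarrow> 'a set \<Rightarrow> (nat \<Rightarrow> nat) \<Rightarrow> (nat \<Rightarrow> 'a set) set" where
  "covers h E b = {Bs \<in> {..<h} \<rightarrow>\<^sub>E Pow E. (\<forall>i<h. card (Bs i) = b i) \<and> (\<Union>i<h. Bs i) = E}"

lemma finite_covers:
  assumes "finite E" shows "finite (covers h E b)"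
proof (rule finite_subset)
  show "covers h E b \<subseteq> {..<h} \<rightarrow>\<^sub>E Pow E" unfolding covers_def by blast
  show "finite ({..<h} \<rightarrow>\<^sub>E Pow E)" using assms by (simp add: finite_PiE)
qed

lemma sum_card_covers_Pow:
  assumes "finite E"
  shows "(\<Sum>D\<in>Pow E. card (covers h D b)) = (\<Prod>i<h. card E choose b i)"
proof -
  have "(\<Union>D\<in>Pow E. covers h D b) = PiE {..<h} (\<lambda>i. {X. X \<subseteq> E \<and> card X = b i})"
  proof
    show "(\<Union>D\<in>Pow E. covers h D b) \<subseteq> PiE {..<h} (\<lambda>i. {X. X \<subseteq> E \<and> card X = b i})"
      unfolding covers_def by (auto simp: PiE_def Pi_def)
    show "PiE {..<h} (\<lambda>i. {X. X \<subseteq> E \<and> card X = b i}) \<subseteq> (\<Union>D\<in>Pow E. covers h D b)"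
    proof
      fix Bs assume Bs: "Bs \<in> PiE {..<h} (\<lambda>i. {X. X \<subseteq> E \<and> card X = b i})"
      then have "Bs \<in> covers h (\<Union>i<h. Bs i) b" unfolding covers_def by (auto simp: PiE_def Pi_def)
      moreover have "(\<Union>i<h. Bs i) \<in> Pow E" using Bs by (auto simp: PiE_def Pi_def)
      ultimately show "Bs \<in> (\<Union>D\<in>Pow E. covers h D b)" by blast
    qed
  qed
  then have "card (\<Union>D\<in>Pow E. covers h D b) = (\<Prod>i<h. card E choose b i)"
    using assms by (simp add: card_PiE n_subsets)
  moreover have "card (\<Union>D\<in>Pow E. covers h D b) = (\<Sum>D\<in>Pow E. card (covers h D b))"
  proof (rule card_UN_disjoint)
    show "\<forall>D\<in>Pow E. finite (covers h D b)" using assms by (blast intro: finite_covers finite_subset)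
    show "\<forall>D\<in>Pow E. \<forall>D'\<in>Pow E. D \<noteq> D' \<longrightarrow> covers h D b \<inter> covers h D' b = {}"
      unfolding covers_def by blast
  qed (use assms in simp)
  ultimately show ?thesis by simp
qed

lemma sum_Pow_psubset_by_card:
  assumes "finite E"
  shows "(\<Sum>D\<in>Pow E - {E}. F (card D)) = (\<Sum>j<card E. of_nat (card E choose j) * F j)"
proof -
  have "card ` (Pow E - {E}) \<subseteq> {..<card E}"
  proof
    fix k assume "k \<in> card ` (Pow E - {E})"
    then obtain D where "D \<subset> E" "k = card D" by blast
    then show "k \<in> {..<card E}" using assms psubset_card_mono by blast
  qed
  then have "(\<Sum>D\<in>Pow E - {E}. F (card D)) =
             (\<Sum>j<card E. of_nat (card {D \<in> Pow E - {E}. card D = j}) * F j)"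
    using assms by (intro sum_fun_comp) auto
  also have "\<dots> = (\<Sum>j<card E. of_nat (card E choose j) * F j)"
  proof (rule sum.cong[OF refl])
    fix j assume "j \<in> {..<card E}"
    then have "{D \<in> Pow E - {E}. card D = j} = {D. D \<subseteq> E \<and> card D = j}" by auto
    then show "of_nat (card {D \<in> Pow E - {E}. card D = j}) * F j = of_nat (card E choose j) * F j"
      using assms by (simp add: n_subsets)
  qed
  finally show ?thesis .
qed

theorem card_covers_eq_Psi:
  assumes "finite E"
  shows "int (card (covers h E b)) = Psi h (card E) b"
  using assms
proof (induction "card E" arbitrary: E rule: less_induct)
  case less
  have smaller: "int (card (covers h D b)) = Psi h (card D) b" if "D \<in> Pow E - {E}" for D
    using that less psubset_card_mono by (intro less.hyps) (auto intro: finite_subset)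
  have "(\<Prod>i<h. int (card E choose b i)) = (\<Sum>D\<in>Pow E. int (card (covers h D b)))"
    using sum_card_covers_Pow[OF less.prems, of h b] by (metis of_nat_prod of_nat_sum)
  also have "\<dots> = int (card (covers h E b)) + (\<Sum>D\<in>Pow E - {E}. Psi h (card D) b)"
    using less.prems smaller by (simp add: sum.remove[of _ E])
  also have "(\<Sum>D\<in>Pow E - {E}. Psi h (card D) b) = (\<Sum>j<card E. int (card E choose j) * Psi h j b)"
    by (rule sum_Pow_psubset_by_card[OF less.prems])
  finally have rec: "int (card (covers h E b)) =
      (\<Prod>i<h. int (card E choose b i)) - (\<Sum>j<card E. int (card E choose j) * Psi h j b)"
    by simp
  show ?case
  proof (cases "card E = 0")
    case True
    then have "(\<Prod>i<h. int (card E choose b i)) = (if \<forall>i<h. b i = 0 then 1 else 0)"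
      by (auto intro: prod_zero)
    then show ?thesis using rec True by simp
  qed (use rec in simp)
qed

lemma Psi_nonneg: "0 \<le> Psi h e b"
  using card_covers_eq_Psi[of "{..<e}" h b] by simp

lemma peel_reach_subset: "peel_reach h NH f Fs R \<Longrightarrow> R \<subseteq> {..<f}"
  by (induction rule: peel_reach.induct) (simp_all add: peelable_def)

lemma peel_reach_imp_peel_final:
  assumes "peel_reach h NH f Fs R\<^sub>0"
  obtains R where "peel_final h NH f Fs R" "R\<^sub>0 \<subseteq> R"
proof -
  let ?P = "\<lambda>R. peel_reach h NH f Fs R \<and> R\<^sub>0 \<subseteq> R"
  have bound: "card R < Suc f" if "?P R" for R
    using that peel_reach_subset[of h NH f Fs R] card_mono[OF finite_lessThan, of R f] by simp
  have "\<exists>R. ?P R \<and> (\<forall>R'. ?P R' \<longrightarrow> card R' \<le> card R)"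
  proof (rule Lattices_Big.ex_has_greatest_nat)
    show "?P R\<^sub>0" using assms by blast
    show "\<forall>R. ?P R \<longrightarrow> card R < Suc f" using bound by blast
  qed
  then obtain R where R: "?P R" and max: "\<And>R'. ?P R' \<Longrightarrow> card R' \<le> card R" by blast
  have "R \<subseteq> {..<f}" using R peel_reach_subset by blast
  then have finR: "finite R" by (rule finite_subset) simp
  have "peel_final h NH f Fs R"
    unfolding peel_final_def
  proof (intro conjI allI impI notI)
    show "peel_reach h NH f Fs R" using R by blast
  next
    fix i r assume i: "i < h" and r: "r < NH" and one: "card {j. j < f \<and> j \<notin> R \<and> Fs i r j} = 1"
    from one obtain c where c: "{j. j < f \<and> j \<notin> R \<and> Fs i r j} = {c}" by (rule card_1_singletonE)
    then have "c \<notin> R" "peelable h NH f Fs R c" unfolding peelable_def using i r by blast+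
    then have "?P (insert c R)" using R peel_reach.step by blast
    then show False using max[of "insert c R"] finR \<open>c \<notin> R\<close> by simp
  qed
  with R that show ?thesis by blast
qed

definition isolated_cols :: "nat \<Rightarrow> nat \<Rightarrow> (nat \<Rightarrow> nat \<Rightarrow> nat) \<Rightarrow> nat set" where
  "isolated_cols h f G = (\<Union>i<h. isolated {..<f} (G i))"

lemma isolated_cols_subset: "isolated_cols h f G \<subseteq> {..<f}"
  unfolding isolated_cols_def isolated_def by blast

lemma peel_reach_isolated_cols:
  assumes G: "G \<in> {..<h} \<rightarrow>\<^sub>E ({..<f} \<rightarrow>\<^sub>E {..<NH})"
    and "finite R" "R \<subseteq> isolated_cols h f G"
  shows "peel_reach h NH f (\<lambda>i\<in>{..<h}. col_matrix f (G i)) R"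
  using \<open>finite R\<close> \<open>R \<subseteq> isolated_cols h f G\<close>
proof (induction R rule: finite_induct)
  case empty
  show ?case by (rule peel_reach.start)
next
  case (insert c R)
  then obtain i where i: "i < h" "c \<in> isolated {..<f} (G i)" by (auto simp: isolated_cols_def)
  then have c: "c < f" and lone: "\<And>j. j < f \<Longrightarrow> G i j = G i c \<Longrightarrow> j = c"
    unfolding isolated_def by auto
  have "G i c < NH" using G i(1) c by auto
  moreover have "{j. j < f \<and> j \<notin> R \<and> (\<lambda>i\<in>{..<h}. col_matrix f (G i)) i (G i c) j} = {c}"
    using i(1) c lone insert.hyps(2) by (intro set_eqI iffI) (auto simp: col_matrix_def)
  ultimately have "peelable h NH f (\<lambda>i\<in>{..<h}. col_matrix f (G i)) R c"
    unfolding peelable_def using c insert.hyps(2) i(1) by blast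
  then show ?case using insert by (blast intro: peel_reach.step)
qed

lemma extracts_at_least_isolated_cols:
  assumes "G \<in> {..<h} \<rightarrow>\<^sub>E ({..<f} \<rightarrow>\<^sub>E {..<NH})"
  shows "extracts_at_least h NH f (\<lambda>i\<in>{..<h}. col_matrix f (G i)) (card (isolated_cols h f G))"
proof -
  have "finite (isolated_cols h f G)" using isolated_cols_subset by (rule finite_subset) simp
  then have "peel_reach h NH f (\<lambda>i\<in>{..<h}. col_matrix f (G i)) (isolated_cols h f G)"
    by (rule peel_reach_isolated_cols[OF assms _ order_refl])
  then obtain R where R: "peel_final h NH f (\<lambda>i\<in>{..<h}. col_matrix f (G i)) R"
    and sub: "isolated_cols h f G \<subseteq> R"
    by (rule peel_reach_imp_peel_final)
  have "R \<subseteq> {..<f}" using R peel_reach_subset unfolding peel_final_def by blast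
  then have "card (isolated_cols h f G) \<le> card R" using sub by (intro card_mono) (auto intro: finite_subset)
  with R show ?thesis unfolding extracts_at_least_def by blast
qed

lemma card_eq_sum_card_fibres:
  assumes "finite S" "finite T" "g ` S \<subseteq> T"
  shows "card S = (\<Sum>y\<in>T. card {x \<in> S. g x = y})"
  using sum_fun_comp[OF assms, of "\<lambda>_. 1 :: nat"] by simp

definition isolated_count :: "nat \<Rightarrow> nat \<Rightarrow> nat \<Rightarrow> nat" where
  "isolated_count n m k = (n choose k) * fact k * z (n - k) (m - k)"

lemma card_tuples_with_isolated:
  fixes h :: nat
  assumes "\<forall>i<h. Bs i \<subseteq> {..<f}"
  shows "card {G \<in> {..<h} \<rightarrow>\<^sub>E ({..<f} \<rightarrow>\<^sub>E {..<NH}). \<forall>i<h. isolated {..<f} (G i) = Bs i}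
         = (\<Prod>i<h. isolated_count NH f (card (Bs i)))"
proof -
  have "{G \<in> {..<h} \<rightarrow>\<^sub>E ({..<f} \<rightarrow>\<^sub>E {..<NH}). \<forall>i<h. isolated {..<f} (G i) = Bs i}
        = PiE {..<h} (\<lambda>i. {g \<in> {..<f} \<rightarrow>\<^sub>E {..<NH}. isolated {..<f} g = Bs i})"
    by (auto simp: PiE_iff extensional_def)
  then have "card {G \<in> {..<h} \<rightarrow>\<^sub>E ({..<f} \<rightarrow>\<^sub>E {..<NH}). \<forall>i<h. isolated {..<f} (G i) = Bs i}
        = card (PiE {..<h} (\<lambda>i. {g \<in> {..<f} \<rightarrow>\<^sub>E {..<NH}. isolated {..<f} g = Bs i}))"
    by (simp only:)
  also have "\<dots> = (\<Prod>i<h. card {g \<in> {..<f} \<rightarrow>\<^sub>E {..<NH}. isolated {..<f} g = Bs i})"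
    by (rule card_PiE) simp
  also have "\<dots> = (\<Prod>i<h. isolated_count NH f (card (Bs i)))"
    using assms by (intro prod.cong) (simp_all add: card_maps_with_isolated isolated_count_def)
  finally show ?thesis .
qed

lemma finite_tuples: "finite ({..<h::nat} \<rightarrow>\<^sub>E ({..<f::nat} \<rightarrow>\<^sub>E {..<NH::nat}))"
  by (simp add: finite_PiE)

lemma covers_disjoint:
  assumes "b \<in> T_set h e" "b' \<in> T_set h e" "b \<noteq> b'"
  shows "covers h E b \<inter> covers h E b' = {}"
proof -
  obtain i where "i < h" "b i \<noteq> b' i"
    using assms extensionalityI[of b "{..<h}" b'] unfolding T_set_def by (auto simp: PiE_def)
  then show ?thesis unfolding covers_def by auto
qed

lemma isolated_profile_mem_covers:
  fixes h :: nat
  assumes "finite E" "isolated_cols h f G = E"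
  shows "(\<lambda>i\<in>{..<h}. card (isolated {..<f} (G i))) \<in> T_set h (card E)"
    and "(\<lambda>i\<in>{..<h}. isolated {..<f} (G i)) \<in> covers h E (\<lambda>i\<in>{..<h}. card (isolated {..<f} (G i)))"
proof -
  have "card (isolated {..<f} (G i)) \<le> card E" if "i < h" for i
    using assms that by (intro card_mono) (auto simp: isolated_cols_def)
  then show "(\<lambda>i\<in>{..<h}. card (isolated {..<f} (G i))) \<in> T_set h (card E)"
    unfolding T_set_def by auto
  show "(\<lambda>i\<in>{..<h}. isolated {..<f} (G i)) \<in> covers h E (\<lambda>i\<in>{..<h}. card (isolated {..<f} (G i)))"
    using assms(2) unfolding covers_def isolated_cols_def by auto
qed

lemma card_tuples_with_isolated_cols:
  fixes h :: nat
  assumes E: "E \<subseteq> {..<f}" "card E = e"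
  shows "card {G \<in> {..<h} \<rightarrow>\<^sub>E ({..<f} \<rightarrow>\<^sub>E {..<NH}). isolated_cols h f G = E}
         = (\<Sum>b\<in>T_set h e. card (covers h E b) * (\<Prod>i<h. isolated_count NH f (b i)))"
proof -
  let ?L = "{G \<in> {..<h} \<rightarrow>\<^sub>E ({..<f} \<rightarrow>\<^sub>E {..<NH}). isolated_cols h f G = E}"
  let ?profile = "\<lambda>G. restrict (\<lambda>i. isolated {..<f} (G i)) {..<h}"
  let ?C = "\<Union>b\<in>T_set h e. covers h E b"
  have finE: "finite E" using E(1) by (rule finite_subset) simp
  have finT: "finite (T_set h e)" unfolding T_set_def by (simp add: finite_PiE)
  have finC: "finite ?C" using finT finE finite_covers by blast
  have finL: "finite ?L" using finite_tuples by (rule finite_subset[rotated]) blast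
  have "?profile ` ?L \<subseteq> ?C"
  proof (rule image_subsetI)
    fix G assume "G \<in> ?L"
    then have "isolated_cols h f G = E" by blast
    from isolated_profile_mem_covers[OF finE this] E(2) show "?profile G \<in> ?C" by blast
  qed
  then have "card ?L = (\<Sum>Bs\<in>?C. card {G \<in> ?L. ?profile G = Bs})"
    by (rule card_eq_sum_card_fibres[OF finL finC])
  also have "\<dots> = (\<Sum>Bs\<in>?C. \<Prod>i<h. isolated_count NH f (card (Bs i)))"
  proof (rule sum.cong[OF refl])
    fix Bs assume Bs: "Bs \<in> ?C"
    then have "{G \<in> ?L. ?profile G = Bs} =
        {G \<in> {..<h} \<rightarrow>\<^sub>E ({..<f} \<rightarrow>\<^sub>E {..<NH}). \<forall>i<h. isolated {..<f} (G i) = Bs i}"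
      unfolding covers_def isolated_cols_def by (auto simp: PiE_def extensional_def fun_eq_iff)
    moreover have "\<forall>i<h. Bs i \<subseteq> {..<f}" using Bs E(1) by (auto simp: covers_def PiE_def)
    ultimately show "card {G \<in> ?L. ?profile G = Bs} = (\<Prod>i<h. isolated_count NH f (card (Bs i)))"
      by (simp add: card_tuples_with_isolated)
  qed
  also have "\<dots> = (\<Sum>b\<in>T_set h e. \<Sum>Bs\<in>covers h E b. \<Prod>i<h. isolated_count NH f (card (Bs i)))"
  proof (rule sum.UNION_disjoint[OF finT])
    show "\<forall>b\<in>T_set h e. finite (covers h E b)" using finE finite_covers by blast
    show "\<forall>b\<in>T_set h e. \<forall>b'\<in>T_set h e. b \<noteq> b' \<longrightarrow> covers h E b \<inter> covers h E b' = {}"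
      using covers_disjoint by blast
  qed
  also have "\<dots> = (\<Sum>b\<in>T_set h e. card (covers h E b) * (\<Prod>i<h. isolated_count NH f (b i)))"
    by (intro sum.cong refl) (simp add: covers_def)
  finally show ?thesis .
qed

lemma card_tuples_with_e_isolated_cols:
  fixes h f NH e :: nat
  assumes "e \<le> f"
  shows "int (card {G \<in> {..<h} \<rightarrow>\<^sub>E ({..<f} \<rightarrow>\<^sub>E {..<NH}). card (isolated_cols h f G) = e})
         = int (f choose e) * (\<Sum>b\<in>T_set h e. Psi h e b * (\<Prod>i<h. int (isolated_count NH f (b i))))"
proof -
  let ?A = "{G \<in> {..<h} \<rightarrow>\<^sub>E ({..<f} \<rightarrow>\<^sub>E {..<NH}). card (isolated_cols h f G) = e}"
  let ?Es = "{E. E \<subseteq> {..<f} \<and> card E = e}"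
  let ?X = "\<Sum>b\<in>T_set h e. Psi h e b * (\<Prod>i<h. int (isolated_count NH f (b i)))"
  have finA: "finite ?A" using finite_tuples by (rule finite_subset[rotated]) blast
  have finEs: "finite ?Es" by (rule finite_subset[of _ "Pow {..<f}"]) auto
  have "isolated_cols h f ` ?A \<subseteq> ?Es" using isolated_cols_subset by blast
  then have "card ?A = (\<Sum>E\<in>?Es. card {G \<in> ?A. isolated_cols h f G = E})"
    by (rule card_eq_sum_card_fibres[OF finA finEs])
  also have "\<dots> = (\<Sum>E\<in>?Es. card {G \<in> {..<h} \<rightarrow>\<^sub>E ({..<f} \<rightarrow>\<^sub>E {..<NH}). isolated_cols h f G = E})"
    by (intro sum.cong refl arg_cong[where f = card]) auto
  finally have "int (card ?A) = (\<Sum>E\<in>?Es. int (card {G \<in> {..<h} \<rightarrow>\<^sub>E ({..<f} \<rightarrow>\<^sub>E {..<NH}). isolated_cols h f G = E}))"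
    by simp
  also have "\<dots> = (\<Sum>E\<in>?Es. ?X)"
  proof (rule sum.cong[OF refl])
    fix E assume E: "E \<in> ?Es"
    then have "finite E" by (auto intro: finite_subset)
    with E show "int (card {G \<in> {..<h} \<rightarrow>\<^sub>E ({..<f} \<rightarrow>\<^sub>E {..<NH}). isolated_cols h f G = E}) = ?X"
      by (simp add: card_tuples_with_isolated_cols card_covers_eq_Psi del: Psi.simps)
  qed
  also have "\<dots> = int (f choose e) * ?X"
    by (simp add: n_subsets)
  finally show ?thesis .
qed

lemma Theta_le:
  "Theta NH f h e \<le> int (f choose e) * (\<Sum>b\<in>T_set h e. Psi h e b * (\<Prod>i<h. int (isolated_count NH f (b i))))"
  unfolding Theta_def isolated_count_def
proof (intro mult_left_mono sum_mono2)
  show "finite (T_set h e)" unfolding T_set_def by (simp add: finite_PiE)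
qed (auto intro!: mult_nonneg_nonneg Psi_nonneg prod_nonneg simp del: Psi.simps)

lemma card_tuples_with_isolated_cols_le:
  fixes h NH f e :: nat
  shows "card {G \<in> {..<h} \<rightarrow>\<^sub>E ({..<f} \<rightarrow>\<^sub>E {..<NH}). card (isolated_cols h f G) = e}
         \<le> card {Fs \<in> states h NH f. extracts_at_least h NH f Fs e}"
proof (rule card_inj_on_le)
  let ?A = "{G \<in> {..<h} \<rightarrow>\<^sub>E ({..<f} \<rightarrow>\<^sub>E {..<NH}). card (isolated_cols h f G) = e}"
  let ?state = "\<lambda>G. \<lambda>i\<in>{..<h}. col_matrix f (G i)"
  show "inj_on ?state ?A"
  proof (rule inj_onI, rule ext)
    fix G G' i assume G: "G \<in> ?A" and G': "G' \<in> ?A" and eq: "?state G = ?state G'"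
    show "G i = G' i"
    proof (cases "i < h")
      case True
      then have "col_matrix f (G i) = col_matrix f (G' i)" using fun_cong[OF eq, of i] by simp
      moreover have "G i \<in> {..<f} \<rightarrow>\<^sub>E {..<NH}" "G' i \<in> {..<f} \<rightarrow>\<^sub>E {..<NH}" using G G' True by auto
      ultimately show ?thesis using inj_onD[OF inj_on_col_matrix] by blast
    next
      case False
      then show ?thesis using G G' by (auto simp: PiE_def extensional_def)
    qed
  qed
  show "?state ` ?A \<subseteq> {Fs \<in> states h NH f. extracts_at_least h NH f Fs e}"
  proof (rule image_subsetI)
    fix G assume G: "G \<in> ?A"
    then have "?state G \<in> states h NH f"
      using col_matrix_image[of f NH] unfolding states_def by auto
    moreover have "extracts_at_least h NH f (?state G) e"
      using extracts_at_least_isolated_cols[of G h f NH] G by simp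
    ultimately show "?state G \<in> {Fs \<in> states h NH f. extracts_at_least h NH f Fs e}" by blast
  qed
  show "finite {Fs \<in> states h NH f. extracts_at_least h NH f Fs e}"
    unfolding states_def by (simp add: finite_PiE finite_S_set)
qed

theorem lemma2:
  fixes h NH f e :: nat
  assumes "h \<ge> 2" and "NH \<ge> 1" and "e \<le> f"
  shows "int (card {Fs \<in> states h NH f. extracts_at_least h NH f Fs e}) \<ge> Theta NH f h e"
proof -
  have "Theta NH f h e \<le> int (f choose e) *
      (\<Sum>b\<in>T_set h e. Psi h e b * (\<Prod>i<h. int (isolated_count NH f (b i))))"
    by (rule Theta_le)
  also have "\<dots> = int (card {G \<in> {..<h} \<rightarrow>\<^sub>E ({..<f} \<rightarrow>\<^sub>E {..<NH}). card (isolated_cols h f G) = e})"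
    by (rule card_tuples_with_e_isolated_cols[OF \<open>e \<le> f\<close>, symmetric])
  also have "\<dots> \<le> int (card {Fs \<in> states h NH f. extracts_at_least h NH f Fs e})"
    using card_tuples_with_isolated_cols_le by simp
  finally show ?thesis .
qed

end
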